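(* For every oriented link $L$, $$\mathcal A_{\mathcal Q}(L)=\sup_{\mathbb X\in\mathcal Q_{\mathcal F}}a_{\mathbb X}(L,\mathcal P_m,\bar 1),$$ where $\bar 1$ assigns $1$ to every component. More precisely, for every odd prime $p$, every $z\ge1$ and every irreducible $h(t)\in\Lambda_p$ of positive breadth there is an irreducible $h'(t)\in\Lambda_p$ of positive breadth with $a_{(\mathbb F(p,h),* )}(L,\mathcal P_m,\bar z)\le a_{(\mathbb F(p,h'),* )}(L,\mathcal P_m,\bar 1)$, where $\bar z$ assigns $z$ to all components. In particular, for every knot $K$ there exists $\mathbb X\in\mathcal Q_{\mathcal F}$ with $\mathcal A_{\mathcal Q}(K)=a_{\mathbb X}(K,1)$.
   Context: A quandle is a set with operation $*$ satisfying $a*a=a$, $(a*b)*c=(a*c)*(b*c)$ and bijectivity of $x\mapsto x*b$; $a*^0b=a$, $a*^nb=(a*^{n-1}b)*b$. For an odd prime $p$, $\Lambda_p=\mathbb Z_p[t,t^{-1}]$; for $h\in\Lambda_p$ irreducible of positive breadth (breadth = highest minus lowest exponent), $\mathbb F(p,h)=\Lambda_p/(h)$, $\bar t$ the class of $t$, $\mathbb X=(\mathbb F(p,h),* )$ with $a*b=\bar ta+(1-\bar t)b$; $\mathcal Q_{\mathcal F}$ is the set of such. For an oriented link $L$, $\mathcal P_m=(L)$. An $\mathbb X$-coloring of a diagram of $L$ with label $z\ge0$ on all components assigns elements of $\mathbb X$ to arcs so that at each crossing with over-arc color $b$ the under-arcs on the right/left of the oriented over-arc have colors $a$ and $a*^zb$;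 colorings form a vector space of dimension $d$ and $a_{\mathbb X}(L,\mathcal P_m,\bar z)=d-1$ (for a knot, $a_{\mathbb X}(K,z)$). $\mathcal A_{\mathcal Q}(L)=\sup a_{\mathbb X}(L,\mathcal P_m,\bar z)$ over $\mathbb X\in\mathcal Q_{\mathcal F}$ and $z\ge0$; this is finite (bounded by the tunnel number). *)

theory Defs
  imports Main "HOL-Computational_Algebra.Polynomial" "Berlekamp_Zassenhaus.Poly_Mod"
begin

text \<open>Elements of \<open>\<Lambda>_p = Z_p[t,t^-1]\<close> that matter here are represented (up to the unit
  \<open>t^k\<close>) by integer polynomials read modulo the prime \<open>p\<close>.  A Laurent polynomial is
  irreducible of positive breadth iff it is \<open>t^k\<close> times a polynomial \<open>h\<close> of \<open>Z_p[t]\<close>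
  that is irreducible, has nonzero constant term and positive degree (= breadth).\<close>

definition irr_pos_breadth :: "int \<Rightarrow> int poly \<Rightarrow> bool" where
  "irr_pos_breadth p h \<longleftrightarrow> poly_mod.irreducible_m p h \<and> poly_mod.degree_m p h \<ge> 1
     \<and> \<not> p dvd coeff h 0"

definition feq :: "int \<Rightarrow> int poly \<Rightarrow> int poly \<Rightarrow> int poly \<Rightarrow> bool" where
  "feq p h x y \<longleftrightarrow> poly_mod.dvdm p h (x - y)"

definition alex_op :: "int poly \<Rightarrow> int poly \<Rightarrow> int poly" where
  "alex_op a b = [:0, 1:] * a + (1 - [:0, 1:]) * b"

definition alex_pow :: "nat \<Rightarrow> int poly \<Rightarrow> int poly \<Rightarrow> int poly" where
  "alex_pow n a b = ((\<lambda>x. alex_op x b) ^^ n) a"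

text \<open>An oriented link diagram, given combinatorially: arcs are \<open>0..<n\<close>;
  each crossing is a triple (over-arc, under-arc on the right of the oriented over-arc,
  under-arc on the left of the oriented over-arc).\<close>
record diagram =
  n_arcs :: nat
  crossings :: "(nat \<times> nat \<times> nat) list"

definition wf_diagram :: "diagram \<Rightarrow> bool" where
  "wf_diagram D \<longleftrightarrow> n_arcs D \<ge> 1 \<and>
     (\<forall>(b, r, l) \<in> set (crossings D). b < n_arcs D \<and> r < n_arcs D \<and> l < n_arcs D)"

text \<open>X-colorings with label z on all components (arc colors are representatives in F(p,h)).\<close>
definition is_coloring :: "int \<Rightarrow> int poly \<Rightarrow> nat \<Rightarrow> diagram \<Rightarrow> (nat \<Rightarrow> int poly) \<Rightarrow> bool" where
  "is_coloring p h z D c \<longleftrightarrow>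
     (\<forall>(b, r, l) \<in> set (crossings D). feq p h (c l) (alex_pow z (c r) (c b)))"

definition lin_indep :: "int \<Rightarrow> int poly \<Rightarrow> nat \<Rightarrow> nat \<Rightarrow> (nat \<Rightarrow> nat \<Rightarrow> int poly) \<Rightarrow> bool" where
  "lin_indep p h n d vs \<longleftrightarrow>
     (\<forall>c :: nat \<Rightarrow> int poly.
        (\<forall>j < n. feq p h (\<Sum>i<d. c i * vs i j) 0) \<longrightarrow> (\<forall>i<d. feq p h (c i) 0))"

definition col_dim :: "int \<Rightarrow> int poly \<Rightarrow> nat \<Rightarrow> diagram \<Rightarrow> nat" where
  "col_dim p h z D = (GREATEST d. \<exists>vs. (\<forall>i<d. is_coloring p h z D (vs i))
       \<and> lin_indep p h (n_arcs D) d vs)"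

definition a_inv :: "int \<Rightarrow> int poly \<Rightarrow> nat \<Rightarrow> diagram \<Rightarrow> int" where
  "a_inv p h z D = int (col_dim p h z D) - 1"

definition QF :: "(int \<times> int poly) set" where
  "QF = {(p, h). prime p \<and> odd p \<and> irr_pos_breadth p h}"

definition A_Q :: "diagram \<Rightarrow> int" where
  "A_Q D = (SUP x \<in> {(p, h, z). (p, h) \<in> QF}. a_inv (fst x) (fst (snd x)) (snd (snd x)) D)"

end

theory Submission
  imports Defs "HOL-Library.Function_Algebras"
begin

(* Fix an odd prime p, an irreducible h with nonzero constant term and z >= 1, and
   let K = F(p,h) = Z_p[t]/(h).  Colorings of a diagram with label z over K are the solutions of
   the linear system  c_l = s c_r + (1 - s) c_b  (one equation per crossing) with s = t^z.
   Let g be the minimal polynomial of s over Z_p; it is irreducible of positive degree with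
   nonzero constant term, and t |-> t^z embeds F = F(p,g) into K.  Under this embedding the
   label-1 system over F becomes the label-z system over K, so it suffices to show that a linear
   system with coefficients in a subfield F of K has at least as many independent solutions
   over F as over K.  This is done by counting: if K has dimension m over F, then |K| = |F|^m,
   every K-solution is a combination of m F-solutions with fixed K-coefficients, hence
   |K|^d <= |S_K| <= |S_F|^m for d independent K-solutions, forcing |S_F| >= |F|^d.
   Since all dimensions are bounded by the number of arcs, both suprema agree. *)

text \<open>A ring \<open>'s\<close> together with the predicate \<open>Zs\<close> ("is zero in the quotient") describing an
  ideal such that the quotient is a finite field.  Working with representatives and an explicit
  ideal avoids constructing quotient types.\<close>

locale quotient_field =
  fixes Zs :: "'s::comm_ring_1 \<Rightarrow> bool"
  assumes Zs_zero: "Zs 0"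
    and Zs_add: "Zs a \<Longrightarrow> Zs b \<Longrightarrow> Zs (a + b)"
    and Zs_mult: "Zs a \<Longrightarrow> Zs (a * b)"
    and Zs_not_one: "\<not> Zs 1"
    and Zs_inverse: "\<not> Zs a \<Longrightarrow> \<exists>b. Zs (a * b - 1)"
    and Zs_finite: "finite (range (\<lambda>a. {b. Zs (a - b)}))"
begin

definition scls :: "'s \<Rightarrow> 's set" where "scls a = {b. Zs (a - b)}"
definition field_size :: nat where "field_size = card (range scls)"
definition srep :: "'s set \<Rightarrow> 's" where "srep X = (SOME a. a \<in> X)"

lemma Zs_mult2: "Zs b \<Longrightarrow> Zs (a * b)"
  using Zs_mult[of b a] by (simp add: mult.commute)

lemma Zs_neg: "Zs a \<Longrightarrow> Zs (- a)"
  using Zs_mult[of a "-1"] by simp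

lemma Zs_neg_iff: "Zs (- a) \<longleftrightarrow> Zs a"
  using Zs_neg[of a] Zs_neg[of "-a"] by auto

lemma Zs_diff: "Zs a \<Longrightarrow> Zs b \<Longrightarrow> Zs (a - b)"
  using Zs_add[of a "-b"] Zs_neg[of b] by simp

lemma Zs_sym: "Zs (a - b) \<Longrightarrow> Zs (b - a)"
  using Zs_neg[of "a - b"] by simp

lemma Zs_trans: "Zs (a - b) \<Longrightarrow> Zs (b - c) \<Longrightarrow> Zs (a - c)"
  using Zs_add[of "a - b" "b - c"] by simp

lemma scls_eq: "scls a = scls b \<longleftrightarrow> Zs (a - b)"
proof
  assume "scls a = scls b"
  then have "b \<in> scls a" by (auto simp: scls_def Zs_zero)
  then show "Zs (a - b)" by (simp add: scls_def)
next
  assume "Zs (a - b)"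
  then show "scls a = scls b" unfolding scls_def
    by (auto simp: set_eq_iff) (metis Zs_sym Zs_trans)+
qed

lemma finite_scls: "finite (range scls)"
  using Zs_finite unfolding scls_def[abs_def] by simp

lemma srep_scls: "Zs (srep (scls a) - a)"
proof -
  have "srep (scls a) \<in> scls a" unfolding srep_def by (rule someI[of _ a]) (simp add: scls_def Zs_zero)
  then show ?thesis by (auto simp: scls_def intro: Zs_sym)
qed

lemma field_size_ge2: "field_size \<ge> 2"
proof -
  have "scls 0 \<noteq> scls 1" using Zs_not_one Zs_neg_iff[of 1] by (simp add: scls_eq)
  then have "card {scls 0, scls 1} = 2" by simp
  moreover have "card {scls 0, scls 1} \<le> field_size" unfolding field_size_def
    by (rule card_mono[OF finite_scls]) auto
  ultimately show ?thesis by simp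
qed

lemma Zs_prime: "Zs (a * b) \<Longrightarrow> Zs a \<or> Zs b"
proof (rule ccontr)
  assume ab: "Zs (a * b)" and "\<not> (Zs a \<or> Zs b)"
  then obtain c where c: "Zs (a * c - 1)" using Zs_inverse by blast
  have "Zs ((a * b) * c)" using ab by (rule Zs_mult)
  then have "Zs (b * (a * c - 1) - (a * b) * c)" using Zs_mult2[OF c, of b] Zs_diff by blast
  then have "Zs (- b)" by (simp add: algebra_simps)
  then show False using \<open>\<not> (Zs a \<or> Zs b)\<close> Zs_neg_iff by blast
qed

end

text \<open>A module over the quotient field: an abelian group \<open>'v\<close> with a predicate \<open>Zv\<close> for the
  submodule to be divided out and a scalar multiplication compatible with both ideals.  The
  quotient is a vector space over the quotient field; we measure subspaces by counting the
  residue classes they meet.\<close>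

locale quotient_module = quotient_field Zs for Zs :: "'s::comm_ring_1 \<Rightarrow> bool" +
  fixes Zv :: "'v::ab_group_add \<Rightarrow> bool" and sm :: "'s \<Rightarrow> 'v \<Rightarrow> 'v"
  assumes Zv_zero: "Zv 0"
    and Zv_add: "Zv v \<Longrightarrow> Zv w \<Longrightarrow> Zv (v + w)"
    and Zv_neg: "Zv v \<Longrightarrow> Zv (- v)"
    and sm_Zs: "Zs a \<Longrightarrow> Zv (sm a v)"
    and sm_Zv: "Zv v \<Longrightarrow> Zv (sm a v)"
    and sm_add1: "sm (a + b) v = sm a v + sm b v"
    and sm_add2: "sm a (v + w) = sm a v + sm a w"
    and sm_mult: "sm (a * b) v = sm a (sm b v)"
    and sm_one: "sm 1 v = v"
    and Zv_finite: "finite (range (\<lambda>v. {w. Zv (v - w)}))"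
begin

definition vcls :: "'v \<Rightarrow> 'v set" where "vcls v = {w. Zv (v - w)}"
definition vrep :: "'v set \<Rightarrow> 'v" where "vrep X = (SOME v. v \<in> X)"

definition num_classes :: "'v set \<Rightarrow> nat" where "num_classes S = card (vcls ` S)"

lemma Zv_diff: "Zv a \<Longrightarrow> Zv b \<Longrightarrow> Zv (a - b)"
  using Zv_add[of a "-b"] Zv_neg[of b] by simp

lemma Zv_sym: "Zv (a - b) \<Longrightarrow> Zv (b - a)"
  using Zv_neg[of "a - b"] by simp

lemma Zv_trans: "Zv (a - b) \<Longrightarrow> Zv (b - c) \<Longrightarrow> Zv (a - c)"
  using Zv_add[of "a - b" "b - c"] by simp

lemma vcls_eq: "vcls a = vcls b \<longleftrightarrow> Zv (a - b)"
proof
  assume "vcls a = vcls b"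
  then have "b \<in> vcls a" by (auto simp: vcls_def Zv_zero)
  then show "Zv (a - b)" by (simp add: vcls_def)
next
  assume "Zv (a - b)"
  then show "vcls a = vcls b" unfolding vcls_def
    by (auto simp: set_eq_iff) (metis Zv_sym Zv_trans)+
qed

lemma finite_vcls: "finite (vcls ` S)"
  using Zv_finite unfolding vcls_def[abs_def] by (rule finite_subset[rotated]) auto

lemma vrep_vcls: "Zv (w - vrep (vcls w))"
proof -
  have "vrep (vcls w) \<in> vcls w" unfolding vrep_def by (rule someI[of _ w]) (simp add: vcls_def Zv_zero)
  then show ?thesis by (simp add: vcls_def)
qed

lemma sm_zero1 [simp]: "sm 0 v = 0"
  using sm_add1[of 0 0 v] by simp

lemma sm_zero2 [simp]: "sm a 0 = 0"
  using sm_add2[of a 0 0] by simp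

lemma sm_neg1: "sm (- a) v = - sm a v"
proof -
  have "sm a v + sm (- a) v = 0" using sm_add1[of a "-a" v] by simp
  then show ?thesis by (metis add.inverse_unique)
qed

lemma sm_diff1: "sm (a - b) v = sm a v - sm b v"
  using sm_add1[of a "-b" v] sm_neg1[of b v] by simp

lemma sm_sum2: "sm a (\<Sum>i<(d::nat). f i) = (\<Sum>i<d. sm a (f i))"
  by (induction d) (simp_all add: sm_add2)

lemma Zv_sum: "(\<And>i. i < (d::nat) \<Longrightarrow> Zv (f i)) \<Longrightarrow> Zv (\<Sum>i<d. f i)"
  by (induction d) (simp_all add: Zv_zero Zv_add)

lemma comb_diff: "(\<Sum>i<(d::nat). sm (a i) (u i)) - (\<Sum>i<d. sm (b i) (u i)) = (\<Sum>i<d. sm (a i - b i) (u i))"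
  by (simp add: sm_diff1 sum_subtractf)

lemma comb_cong: "(\<And>i. i < (d::nat) \<Longrightarrow> Zs (a i - b i)) \<Longrightarrow>
   Zv ((\<Sum>i<d. sm (a i) (u i)) - (\<Sum>i<d. sm (b i) (u i)))"
  unfolding comb_diff by (rule Zv_sum) (rule sm_Zs, simp)

definition indep :: "(nat \<Rightarrow> 'v) \<Rightarrow> nat \<Rightarrow> bool" where
  "indep u d \<longleftrightarrow> (\<forall>a. Zv (\<Sum>i<d. sm (a i) (u i)) \<longrightarrow> (\<forall>i<d. Zs (a i)))"

definition spans :: "'v set \<Rightarrow> (nat \<Rightarrow> 'v) \<Rightarrow> nat \<Rightarrow> bool" where
  "spans S u r \<longleftrightarrow> (\<forall>s\<in>S. \<exists>a. Zv (s - (\<Sum>i<r. sm (a i) (u i))))"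

definition subspace :: "'v set \<Rightarrow> bool" where
  "subspace S \<longleftrightarrow> 0 \<in> S \<and> (\<forall>v\<in>S. \<forall>w\<in>S. v + w \<in> S) \<and> (\<forall>a. \<forall>v\<in>S. sm a v \<in> S)"

lemma subspace_sum: "subspace S \<Longrightarrow> (\<And>i. i < (d::nat) \<Longrightarrow> u i \<in> S) \<Longrightarrow> (\<Sum>i<d. sm (a i) (u i)) \<in> S"
  by (induction d) (auto simp: subspace_def)

definition comb_class :: "(nat \<Rightarrow> 'v) \<Rightarrow> nat \<Rightarrow> (nat \<Rightarrow> 's set) \<Rightarrow> 'v set" where
  "comb_class u d f = vcls (\<Sum>i<d. sm (srep (f i)) (u i))"

lemma card_tuples: "card (PiE {..<(d::nat)} (\<lambda>_. range scls)) = field_size ^ d"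
  by (simp add: card_PiE field_size_def)

lemma finite_tuples: "finite (PiE {..<(d::nat)} (\<lambda>_. range scls))"
  by (rule finite_PiE) (auto simp: finite_scls)

lemma indep_card_lower:
  assumes S: "subspace S" and u: "\<And>i. i < d \<Longrightarrow> u i \<in> S" and ind: "indep u d"
  shows "field_size ^ d \<le> num_classes S"
proof -
  have inj: "inj_on (comb_class u d) (PiE {..<d} (\<lambda>_. range scls))"
  proof
    fix f g assume f: "f \<in> PiE {..<d} (\<lambda>_. range scls)" and g: "g \<in> PiE {..<d} (\<lambda>_. range scls)"
      and e: "comb_class u d f = comb_class u d g"
    from e have "Zv (\<Sum>i<d. sm (srep (f i) - srep (g i)) (u i))"
      unfolding comb_class_def vcls_eq comb_diff .
    then have z: "\<And>i. i < d \<Longrightarrow> Zs (srep (f i) - srep (g i))"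
      using ind[unfolded indep_def, rule_format, of "\<lambda>i. srep (f i) - srep (g i)"] by simp
    show "f = g"
    proof (rule PiE_ext[OF f g])
      fix i assume "i \<in> {..<d}"
      then have i: "i < d" by simp
      from f i obtain a where a: "f i = scls a" by auto
      from g i obtain b where b: "g i = scls b" by auto
      have "Zs (a - b)"
        using z[OF i] srep_scls[of a] srep_scls[of b] unfolding a b by (meson Zs_sym Zs_trans)
      then show "f i = g i" unfolding a b scls_eq .
    qed
  qed
  have sub: "comb_class u d ` PiE {..<d} (\<lambda>_. range scls) \<subseteq> vcls ` S"
  proof (rule image_subsetI)
    fix f assume "f \<in> PiE {..<d} (\<lambda>_. range scls)"
    show "comb_class u d f \<in> vcls ` S" unfolding comb_class_def by (rule imageI, rule subspace_sum[OF S u])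
  qed
  have "field_size ^ d = card (comb_class u d ` PiE {..<d} (\<lambda>_. range scls))"
    using card_image[OF inj] card_tuples by simp
  also have "\<dots> \<le> num_classes S" unfolding num_classes_def by (rule card_mono[OF finite_vcls sub])
  finally show ?thesis .
qed

lemma spans_card_upper:
  assumes sp: "spans S u r"
  shows "num_classes S \<le> field_size ^ r"
proof -
  have sub: "vcls ` S \<subseteq> comb_class u r ` PiE {..<r} (\<lambda>_. range scls)"
  proof
    fix X assume "X \<in> vcls ` S"
    then obtain s where s: "s \<in> S" and X: "X = vcls s" by auto
    from sp s obtain a where a: "Zv (s - (\<Sum>i<r. sm (a i) (u i)))" unfolding spans_def by blast
    let ?f = "restrict (\<lambda>i. scls (a i)) {..<r}"
    have "Zv ((\<Sum>i<r. sm (a i) (u i)) - (\<Sum>i<r. sm (srep (?f i)) (u i)))"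
      by (rule comb_cong) (auto intro: Zs_sym srep_scls)
    with a have "Zv (s - (\<Sum>i<r. sm (srep (?f i)) (u i)))" by (rule Zv_trans)
    then have "X = comb_class u r ?f" unfolding X comb_class_def vcls_eq .
    moreover have "?f \<in> PiE {..<r} (\<lambda>_. range scls)" by auto
    ultimately show "X \<in> comb_class u r ` PiE {..<r} (\<lambda>_. range scls)" by blast
  qed
  have "num_classes S \<le> card (comb_class u r ` PiE {..<r} (\<lambda>_. range scls))"
    unfolding num_classes_def by (rule card_mono[OF finite_imageI[OF finite_tuples] sub])
  also have "\<dots> \<le> card (PiE {..<r} (\<lambda>_. range scls))" by (rule card_image_le[OF finite_tuples])
  finally show ?thesis using card_tuples by simp
qed

lemma sum_upd_Suc: "(\<Sum>i<Suc r. sm (a i) ((u(r := s)) i)) = (\<Sum>i<r. sm (a i) (u i)) + sm (a r) s"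
proof -
  have "(\<Sum>i<r. sm (a i) ((u(r := s)) i)) = (\<Sum>i<r. sm (a i) (u i))"
    by (rule sum.cong) auto
  then show ?thesis by simp
qed

lemma indep_extend:
  assumes ind: "indep u r" and ns: "\<not> (\<exists>a. Zv (s - (\<Sum>i<r. sm (a i) (u i))))"
  shows "indep (u(r := s)) (Suc r)"
  unfolding indep_def
proof (rule allI, rule impI)
  fix a assume "Zv (\<Sum>i<Suc r. sm (a i) ((u(r := s)) i))"
  then have z: "Zv ((\<Sum>i<r. sm (a i) (u i)) + sm (a r) s)" unfolding sum_upd_Suc .
  have ar: "Zs (a r)"
  proof (rule ccontr)
    assume "\<not> Zs (a r)"
    then obtain b where b: "Zs (a r * b - 1)" using Zs_inverse by blast
    have "Zv (sm b ((\<Sum>i<r. sm (a i) (u i)) + sm (a r) s) - sm (a r * b - 1) s)"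
      using sm_Zv[OF z] sm_Zs[OF b] by (rule Zv_diff)
    moreover have "sm b ((\<Sum>i<r. sm (a i) (u i)) + sm (a r) s) - sm (a r * b - 1) s
        = s - (\<Sum>i<r. sm (- (b * a i)) (u i))"
      by (simp add: sm_add2 sm_sum2 sm_mult sm_diff1 sm_one sm_neg1 sum_negf mult.commute)
    ultimately show False using ns by auto
  qed
  then have "Zv (\<Sum>i<r. sm (a i) (u i))"
    using Zv_diff[OF z sm_Zs[OF ar, of s]] by simp
  then have "\<forall>i<r. Zs (a i)" using ind unfolding indep_def by blast
  with ar show "\<forall>i<Suc r. Zs (a i)" by (auto simp: less_Suc_eq)
qed

lemma indep_length_bound:
  assumes S: "subspace S" and u: "\<And>i. i < r \<Longrightarrow> u i \<in> S" and ind: "indep u r"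
  shows "r < card (range vcls)"
proof -
  have "field_size ^ r \<le> num_classes S" by (rule indep_card_lower[OF S u ind])
  also have "\<dots> \<le> card (range vcls)" unfolding num_classes_def
    by (rule card_mono[OF finite_vcls]) auto
  finally have bound: "field_size ^ r \<le> card (range vcls)" .
  have "r < 2 ^ r" by (rule less_exp)
  also have "(2::nat) ^ r \<le> field_size ^ r" using field_size_ge2 by (rule power_mono) simp
  finally show ?thesis using bound by (rule less_le_trans)
qed

text \<open>Every subspace has a basis: a maximal independent family spans it.\<close>

lemma basis_exists:
  assumes S: "subspace S"
  shows "\<exists>r u. (\<forall>i<r. u i \<in> S) \<and> indep u r \<and> spans S u r"
proof -
  define P where "P r \<longleftrightarrow> (\<exists>u. (\<forall>i<r. u i \<in> S) \<and> indep u r)" for r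
  have P0: "P 0" by (auto simp: P_def indep_def)
  have bd: "\<forall>r. P r \<longrightarrow> r \<le> card (range vcls)"
    using indep_length_bound[OF S] unfolding P_def by (meson less_imp_le)
  define r where "r = (GREATEST r. P r)"
  have "P r" unfolding r_def using GreatestI_nat[of P 0 "card (range vcls)"] P0 bd by blast
  then obtain u where u: "\<forall>i<r. u i \<in> S" "indep u r" unfolding P_def by blast
  have "spans S u r"
    unfolding spans_def
  proof
    fix s assume s: "s \<in> S"
    show "\<exists>a. Zv (s - (\<Sum>i<r. sm (a i) (u i)))"
    proof (rule ccontr)
      assume ns: "\<not> (\<exists>a. Zv (s - (\<Sum>i<r. sm (a i) (u i))))"
      have "P (Suc r)" unfolding P_def
        using indep_extend[OF u(2) ns] u(1) s by (intro exI[of _ "u(r := s)"]) (auto simp: less_Suc_eq)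
      then have "Suc r \<le> (GREATEST r. P r)"
        using bd by (intro Greatest_le_nat[of P "Suc r" "card (range vcls)"]) auto
      then show False by (simp add: r_def)
    qed
  qed
  with u show ?thesis by blast
qed

lemma indep_truncate:
  assumes ind: "indep u r" and dr: "d \<le> r"
  shows "indep u d"
  unfolding indep_def
proof (rule allI, rule impI)
  fix a assume z: "Zv (\<Sum>i<d. sm (a i) (u i))"
  define a' where "a' i = (if i < d then a i else 0)" for i
  have "(\<Sum>i<r. sm (a' i) (u i)) = (\<Sum>i<d. sm (a i) (u i))"
    by (rule sum.mono_neutral_cong_right) (use dr in \<open>auto simp: a'_def\<close>)
  with z have "\<forall>i<r. Zs (a' i)" using ind[unfolded indep_def, rule_format, of a'] by simp
  then show "\<forall>i<d. Zs (a i)" using dr by (metis a'_def order_less_le_trans)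
qed

lemma indep_iff_card:
  assumes S: "subspace S"
  shows "(\<exists>u. (\<forall>i<d. u i \<in> S) \<and> indep u d) \<longleftrightarrow> field_size ^ d \<le> num_classes S"
proof
  assume "\<exists>u. (\<forall>i<d. u i \<in> S) \<and> indep u d"
  then show "field_size ^ d \<le> num_classes S" using indep_card_lower[OF S] by blast
next
  assume a: "field_size ^ d \<le> num_classes S"
  obtain r u where u: "\<forall>i<r. u i \<in> S" "indep u r" "spans S u r" using basis_exists[OF S] by blast
  have "field_size ^ d \<le> field_size ^ r" using a spans_card_upper[OF u(3)] by linarith
  then have "d \<le> r" using field_size_ge2 by (simp add: power_increasing_iff)
  then show "\<exists>u. (\<forall>i<d. u i \<in> S) \<and> indep u d"
    by (intro exI[of _ u]) (use u(1) indep_truncate[OF u(2)] in auto)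
qed

end

lemma fun_sum_apply: "(\<Sum>i<(d::nat). f i) (j::'b) = (\<Sum>i<d. f i j)"
  by (induction d) auto

lemma sum_affine_comb: "(\<Sum>k<(m::nat). (X k - t * Y k - (1 - t) * Z k) * e k) =
  (\<Sum>k<m. X k * e k) - t * (\<Sum>k<m. Y k * e k) - (1 - t) * (\<Sum>k<m. Z k * e k)"
  for X Y Z e :: "nat \<Rightarrow> 'r::comm_ring_1"
  by (induction m) (simp_all add: algebra_simps)

context quotient_field begin

lemma vectors_module: "quotient_module Zs (\<lambda>v::nat \<Rightarrow> 's. \<forall>j<n. Zs (v j)) (\<lambda>a v j. a * v j)"
  apply (rule quotient_module.intro[OF quotient_field_axioms], rule quotient_module_axioms.intro)
  subgoal by (simp add: Zs_zero)
  subgoal by (simp add: Zs_add)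
  subgoal by (simp add: Zs_neg)
  subgoal by (simp add: Zs_mult)
  subgoal by (simp add: Zs_mult2)
  subgoal by (simp add: fun_eq_iff distrib_right)
  subgoal by (simp add: fun_eq_iff distrib_left)
  subgoal by (simp add: fun_eq_iff mult.assoc)
  subgoal by simp
proof -
  have cong: "Zs (x - y) \<Longrightarrow> Zs (x - w) \<longleftrightarrow> Zs (y - w)" for x y w
    by (metis Zs_sym Zs_trans)
  show "finite (range (\<lambda>v::nat \<Rightarrow> 's. {w. \<forall>j<n. Zs ((v - w) j)}))"
  proof (rule finite_subset)
    show "range (\<lambda>v::nat \<Rightarrow> 's. {w. \<forall>j<n. Zs ((v - w) j)}) \<subseteq>
      (\<lambda>F. {w. \<forall>j<n. Zs (srep (F j) - w j)}) ` PiE {..<n} (\<lambda>_. range scls)"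
    proof
      fix X assume "X \<in> range (\<lambda>v::nat \<Rightarrow> 's. {w. \<forall>j<n. Zs ((v - w) j)})"
      then obtain v :: "nat \<Rightarrow> 's" where X: "X = {w. \<forall>j<n. Zs ((v - w) j)}" by auto
      let ?F = "restrict (\<lambda>j. scls (v j)) {..<n}"
      have "Zs (v j - w) \<longleftrightarrow> Zs (srep (?F j) - w)" if "j < n" for j w
        using cong[OF Zs_sym[OF srep_scls[of "v j"]], of w] that by simp
      then have "X = {w. \<forall>j<n. Zs (srep (?F j) - w j)}" unfolding X by simp
      moreover have "?F \<in> PiE {..<n} (\<lambda>_. range scls)" by auto
      ultimately show "X \<in> (\<lambda>F. {w. \<forall>j<n. Zs (srep (F j) - w j)}) ` PiE {..<n} (\<lambda>_. range scls)"
        by blast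
    qed
    show "finite ((\<lambda>F. {w. \<forall>j<n. Zs (srep (F j) - w j)}) ` PiE {..<n} (\<lambda>_. range scls))"
      by (rule finite_imageI, rule finite_PiE) (auto simp: finite_scls)
  qed
qed

end

locale linear_system = quotient_field Zs for Zs :: "'s::comm_ring_1 \<Rightarrow> bool" +
  fixes n :: nat and cr :: "(nat \<times> nat \<times> nat) list"
begin

sublocale quotient_module Zs "\<lambda>v::nat \<Rightarrow> 's. \<forall>j<n. Zs (v j)" "\<lambda>a v j. a * v j"
  by (rule vectors_module)

definition solutions :: "'s \<Rightarrow> (nat \<Rightarrow> 's) set" where
  "solutions t = {v. \<forall>(b, r, l) \<in> set cr. Zs (v l - t * v r - (1 - t) * v b)}"

definition sol_dim :: "'s \<Rightarrow> nat" where
  "sol_dim t = (GREATEST d. \<exists>u. (\<forall>i<d. u i \<in> solutions t) \<and> indep u d)"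

lemma subspace_solutions: "subspace (solutions t)"
  unfolding subspace_def
proof (intro conjI ballI allI)
  show "0 \<in> solutions t" by (simp add: solutions_def Zs_zero)
  fix v w assume v: "v \<in> solutions t" and w: "w \<in> solutions t"
  show "v + w \<in> solutions t" unfolding solutions_def
  proof (clarify)
    fix b r l assume brl: "(b, r, l) \<in> set cr"
    have eq: "(v + w) l - t * (v + w) r - (1 - t) * (v + w) b =
      (v l - t * v r - (1 - t) * v b) + (w l - t * w r - (1 - t) * w b)"
      by (simp add: algebra_simps)
    show "Zs ((v + w) l - t * (v + w) r - (1 - t) * (v + w) b)"
      unfolding eq by (rule Zs_add) (use v w brl in \<open>auto simp: solutions_def\<close>)
  qed
next
  fix a v assume v: "v \<in> solutions t"
  show "(\<lambda>j. a * v j) \<in> solutions t" unfolding solutions_def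
  proof (clarify)
    fix b r l assume brl: "(b, r, l) \<in> set cr"
    have eq: "a * v l - t * (a * v r) - (1 - t) * (a * v b) = a * (v l - t * v r - (1 - t) * v b)"
      by (simp add: algebra_simps)
    show "Zs (a * v l - t * (a * v r) - (1 - t) * (a * v b))"
      unfolding eq by (rule Zs_mult2) (use v brl in \<open>auto simp: solutions_def\<close>)
  qed
qed

text \<open>At most \<open>n\<close> vectors of length \<open>n\<close> are independent, because the unit vectors span.\<close>

lemma indep_le_length:
  assumes ind: "indep u d"
  shows "d \<le> n"
proof -
  have sU: "subspace UNIV" by (simp add: subspace_def)
  let ?unit = "\<lambda>i j. if j = i then (1::'s) else 0"
  have "spans UNIV ?unit n"
    unfolding spans_def
  proof
    fix s :: "nat \<Rightarrow> 's"
    have "(\<Sum>i<n. s i * ?unit i j) = s j" if "j < n" for j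
    proof -
      have "(\<Sum>i<n. s i * ?unit i j) = (\<Sum>i<n. if j = i then s i else 0)"
        by (rule sum.cong) auto
      then show ?thesis using that by simp
    qed
    then have "\<forall>j<n. Zs ((s - (\<Sum>i<n. (\<lambda>j. s i * ?unit i j))) j)"
      by (simp add: fun_sum_apply Zs_zero)
    then show "\<exists>a. \<forall>j<n. Zs ((s - (\<Sum>i<n. (\<lambda>j. a i * ?unit i j))) j)" by blast
  qed
  then have "num_classes UNIV \<le> field_size ^ n" by (rule spans_card_upper)
  with indep_card_lower[OF sU _ ind] have "field_size ^ d \<le> field_size ^ n" by simp
  then show ?thesis using field_size_ge2 by (simp add: power_increasing_iff)
qed

lemma sol_dim_attained: "\<exists>u. (\<forall>i<sol_dim t. u i \<in> solutions t) \<and> indep u (sol_dim t)"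
proof -
  have "\<exists>u. (\<forall>i<0. u i \<in> solutions t) \<and> indep u 0" by (simp add: indep_def)
  then show ?thesis unfolding sol_dim_def
    by (rule GreatestI_nat[where b = n]) (use indep_le_length in blast)
qed

lemma sol_dim_greatest: "(\<forall>i<d. u i \<in> solutions t) \<Longrightarrow> indep u d \<Longrightarrow> d \<le> sol_dim t"
  unfolding sol_dim_def by (rule Greatest_le_nat[where b = n]) (blast, use indep_le_length in blast)

lemma sol_dim_le_length: "sol_dim t \<le> n"
  using sol_dim_attained indep_le_length by blast

end

text \<open>An embedding \<open>\<phi>\<close> of the quotient field for \<open>Zf\<close> into the one for \<open>Zk\<close>, given on
  representatives; it makes the larger field \<open>K\<close> a vector space \<open>E\<close> over the smaller \<open>F\<close>.\<close>

locale field_embedding = F: quotient_field Zf + K: quotient_field Zk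
  for Zf Zk :: "'r::comm_ring_1 \<Rightarrow> bool" +
  fixes \<phi> :: "'r \<Rightarrow> 'r"
  assumes phi_add: "\<phi> (a + b) = \<phi> a + \<phi> b"
    and phi_mult: "\<phi> (a * b) = \<phi> a * \<phi> b"
    and phi_one: "\<phi> 1 = 1"
    and phi_Z: "Zf a \<Longrightarrow> Zk (\<phi> a)"
begin

lemma phi_diff: "\<phi> (a - b) = \<phi> a - \<phi> b"
  using phi_add[of "a - b" b] by simp

sublocale E: quotient_module Zf Zk "\<lambda>a x. \<phi> a * x"
  by unfold_locales
    (simp_all add: K.Zs_zero K.Zs_add K.Zs_neg K.Zs_mult K.Zs_mult2 phi_Z phi_add phi_mult
      phi_one K.Zs_finite distrib_left distrib_right mult.assoc)

end

locale system_transfer = field_embedding Zf Zk \<phi> for Zf Zk :: "'r::comm_ring_1 \<Rightarrow> bool" and \<phi> +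
  fixes n :: nat and cr :: "(nat \<times> nat \<times> nat) list"
begin

sublocale VK: linear_system Zk n cr ..
sublocale VF: linear_system Zf n cr ..

text \<open>Writing every coordinate of a \<open>K\<close>-solution in an \<open>F\<close>-basis \<open>e\<close> of \<open>K\<close>, the coefficient
  vectors are \<open>F\<close>-solutions, because the equations have coefficients in \<open>F\<close>.\<close>

lemma coefficient_vectors_solve:
  assumes e: "E.indep e m" and v: "v \<in> VK.solutions (\<phi> t)"
    and A: "\<And>j. Zk (v j - (\<Sum>k<m. \<phi> (A j k) * e k))" and k: "k < m"
  shows "(\<lambda>j. A j k) \<in> VF.solutions t"
  unfolding VF.solutions_def
proof (clarify)
  fix b r l assume brl: "(b, r, l) \<in> set cr"
  define S where "S j = (\<Sum>k<m. \<phi> (A j k) * e k)" for j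
  define c where "c k = A l k - t * A r k - (1 - t) * A b k" for k
  have "(\<Sum>k<m. \<phi> (c k) * e k) = S l - \<phi> t * S r - (1 - \<phi> t) * S b"
  proof -
    have "\<phi> (c k) = \<phi> (A l k) - \<phi> t * \<phi> (A r k) - (1 - \<phi> t) * \<phi> (A b k)" for k
      by (simp add: c_def phi_diff phi_mult phi_one)
    then show ?thesis unfolding S_def by (simp add: sum_affine_comb)
  qed
  also have "\<dots> = (v l - \<phi> t * v r - (1 - \<phi> t) * v b)
      - ((v l - S l) - \<phi> t * (v r - S r) - (1 - \<phi> t) * (v b - S b))"
    by (simp add: algebra_simps)
  also have "Zk \<dots>"
  proof (rule K.Zs_diff)
    show "Zk (v l - \<phi> t * v r - (1 - \<phi> t) * v b)" using v brl unfolding VK.solutions_def by auto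
    have "Zk (v l - S l)" "Zk (v r - S r)" "Zk (v b - S b)" using A unfolding S_def by auto
    then show "Zk ((v l - S l) - \<phi> t * (v r - S r) - (1 - \<phi> t) * (v b - S b))"
      by (rule K.Zs_diff[OF K.Zs_diff[OF _ K.Zs_mult2] K.Zs_mult2])
  qed
  finally have "Zk (\<Sum>k<m. \<phi> (c k) * e k)" .
  then have "Zf (c k)" using e[unfolded E.indep_def, rule_format, of c] k by blast
  then show "Zf (A l k - t * A r k - (1 - t) * A b k)" by (simp add: c_def)
qed

lemma solution_class_decomposition:
  assumes ind: "E.indep e m" and sp: "E.spans UNIV e m" and v: "v \<in> VK.solutions (\<phi> t)"
  shows "\<exists>G \<in> PiE {..<m} (\<lambda>_. VF.vcls ` VF.solutions t).
    VK.vcls v = VK.vcls (\<lambda>j. \<Sum>k<m. \<phi> (VF.vrep (G k) j) * e k)"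
proof -
  have "\<forall>j. \<exists>a. Zk (v j - (\<Sum>k<m. \<phi> (a k) * e k))"
    using sp unfolding E.spans_def by blast
  then obtain A where A: "\<And>j. Zk (v j - (\<Sum>k<m. \<phi> (A j k) * e k))" by metis
  define w where "w k = (\<lambda>j. A j k)" for k
  let ?G = "restrict (\<lambda>k. VF.vcls (w k)) {..<m}"
  have "?G \<in> PiE {..<m} (\<lambda>_. VF.vcls ` VF.solutions t)"
    using coefficient_vectors_solve[OF ind v A] by (auto simp: w_def)
  moreover have "VK.vcls v = VK.vcls (\<lambda>j. \<Sum>k<m. \<phi> (VF.vrep (?G k) j) * e k)"
    unfolding VK.vcls_eq
  proof (intro allI impI)
    fix j assume j: "j < n"
    have d: "Zk (\<phi> (A j k) - \<phi> (VF.vrep (?G k) j))" if k: "k < m" for k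
    proof -
      have "\<forall>j<n. Zf ((w k - VF.vrep (VF.vcls (w k))) j)" by (rule VF.vrep_vcls)
      with j k have "Zf (A j k - VF.vrep (?G k) j)" by (simp add: w_def)
      then show ?thesis unfolding phi_diff[symmetric] by (rule phi_Z)
    qed
    have eq: "(v - (\<lambda>j. \<Sum>k<m. \<phi> (VF.vrep (?G k) j) * e k)) j =
       (v j - (\<Sum>k<m. \<phi> (A j k) * e k)) + (\<Sum>k<m. (\<phi> (A j k) - \<phi> (VF.vrep (?G k) j)) * e k)"
      by (simp add: algebra_simps sum_subtractf)
    show "Zk ((v - (\<lambda>j. \<Sum>k<m. \<phi> (VF.vrep (?G k) j) * e k)) j)"
      unfolding eq
    proof (rule K.Zs_add)
      show "Zk (v j - (\<Sum>k<m. \<phi> (A j k) * e k))" by (rule A)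
      show "Zk (\<Sum>k<m. (\<phi> (A j k) - \<phi> (VF.vrep (?G k) j)) * e k)"
        by (rule E.Zv_sum) (use d in \<open>auto intro: K.Zs_mult\<close>)
    qed
  qed
  ultimately show ?thesis by blast
qed

lemma card_solutions_upper:
  assumes ind: "E.indep e m" and sp: "E.spans UNIV e m"
  shows "VK.num_classes (VK.solutions (\<phi> t)) \<le> VF.num_classes (VF.solutions t) ^ m"
proof -
  define P where "P = PiE {..<m} (\<lambda>_. VF.vcls ` VF.solutions t)"
  define \<Psi> where "\<Psi> G = VK.vcls (\<lambda>j. \<Sum>k<m. \<phi> (VF.vrep (G k) j) * e k)" for G
  have sub: "VK.vcls ` VK.solutions (\<phi> t) \<subseteq> \<Psi> ` P"
    using solution_class_decomposition[OF ind sp] unfolding P_def \<Psi>_def by blast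
  have finP: "finite P" unfolding P_def by (rule finite_PiE) (auto simp: VF.finite_vcls)
  have "VK.num_classes (VK.solutions (\<phi> t)) \<le> card (\<Psi> ` P)"
    unfolding VK.num_classes_def by (rule card_mono[OF finite_imageI[OF finP] sub])
  also have "\<dots> \<le> card P" by (rule card_image_le[OF finP])
  also have "\<dots> = VF.num_classes (VF.solutions t) ^ m" by (simp add: P_def card_PiE VF.num_classes_def)
  finally show ?thesis .
qed

text \<open>The counting argument: \<open>|F| ^ (m d) \<le> |K| ^ d \<le> |S_K| \<le> |S_F| ^ m\<close>, so \<open>|F| ^ d \<le> |S_F|\<close>.\<close>

lemma indep_solutions_transfer:
  assumes "\<exists>u. (\<forall>i<d. u i \<in> VK.solutions (\<phi> t)) \<and> VK.indep u d"
  shows "\<exists>w. (\<forall>i<d. w i \<in> VF.solutions t) \<and> VF.indep w d"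
proof -
  have sU: "E.subspace UNIV" by (simp add: E.subspace_def)
  obtain m e where e: "E.indep e m" "E.spans UNIV e m"
    using E.basis_exists[OF sU] by blast
  have clsK: "E.num_classes UNIV = K.field_size"
    by (simp add: E.num_classes_def K.field_size_def E.vcls_def K.scls_def)
  have degree_lower: "F.field_size ^ m \<le> K.field_size"
    using E.indep_card_lower[OF sU _ e(1)] clsK by simp
  have degree_upper: "K.field_size \<le> F.field_size ^ m"
    using E.spans_card_upper[OF e(2)] clsK by simp
  obtain m' where m: "m = Suc m'" using degree_upper K.field_size_ge2 by (cases m) auto
  have "(F.field_size ^ d) ^ m = (F.field_size ^ m) ^ d" by (simp add: power_mult[symmetric] mult.commute)
  also have "\<dots> \<le> K.field_size ^ d" by (rule power_mono[OF degree_lower]) simp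
  also have "\<dots> \<le> VK.num_classes (VK.solutions (\<phi> t))"
    using assms VK.indep_iff_card[OF VK.subspace_solutions] by blast
  also have "\<dots> \<le> VF.num_classes (VF.solutions t) ^ m" by (rule card_solutions_upper[OF e])
  finally have "F.field_size ^ d \<le> VF.num_classes (VF.solutions t)"
    unfolding m by (rule power_le_imp_le_base) simp
  then show ?thesis using VF.indep_iff_card[OF VF.subspace_solutions] by blast
qed

theorem sol_dim_transfer: "VK.sol_dim (\<phi> t) \<le> VF.sol_dim t"
proof -
  obtain w where "\<forall>i<VK.sol_dim (\<phi> t). w i \<in> VF.solutions t" "VF.indep w (VK.sol_dim (\<phi> t))"
    using indep_solutions_transfer VK.sol_dim_attained by blast
  then show ?thesis by (rule VF.sol_dim_greatest)
qed

end

context poly_mod_prime begin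

definition zero_m :: "int poly \<Rightarrow> bool" where "zero_m x \<longleftrightarrow> Mp x = 0"

lemma zero_m_add: "zero_m a \<Longrightarrow> zero_m b \<Longrightarrow> zero_m (a + b)"
  unfolding zero_m_def by (metis Mp_0 add_0 plus_Mp(1) plus_Mp(2))

lemma zero_m_mult: "zero_m a \<Longrightarrow> zero_m (a * b)"
  unfolding zero_m_def by (metis Mp_0 mult_Mp(1) mult_zero_left)

lemma zero_m_neg: "zero_m a \<Longrightarrow> zero_m (- a)"
  using zero_m_mult[of a "-1"] by simp

lemma zero_m_diff: "zero_m a \<Longrightarrow> zero_m b \<Longrightarrow> zero_m (a - b)"
  using zero_m_add[of a "-b"] zero_m_neg[of b] by simp

lemma zero_m_sym: "zero_m (a - b) \<Longrightarrow> zero_m (b - a)"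
  using zero_m_neg[of "a - b"] by simp

lemma zero_m_iff: "f =m g \<longleftrightarrow> zero_m (f - g)"
  unfolding zero_m_def by (metis Mp_0 diff_self minus_Mp(1) diff_add_cancel plus_Mp(1) add_0)

lemma zero_m_Mp: "zero_m (Mp f - f)"
  using zero_m_iff[of "Mp f" f] by simp

lemma dvdm_iff: "f dvdm x \<longleftrightarrow> (\<exists>q. zero_m (x - f * q))"
  unfolding dvdm_def zero_m_iff ..

lemma dvdm_zero_m: "zero_m x \<Longrightarrow> h dvdm x"
  unfolding dvdm_iff by (rule exI[of _ 0]) simp

lemma dvdm_diff: "h dvdm a \<Longrightarrow> h dvdm b \<Longrightarrow> h dvdm (a - b)"
  using dvdm_add[of h a "-b"] by simp

lemma dvdm_cong: "h dvdm x \<Longrightarrow> zero_m (y - x) \<Longrightarrow> h dvdm y"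
  using dvdm_add[of h "y - x" x] dvdm_zero_m[of "y - x" h] by simp

lemma inverse_exists: assumes "\<not> p dvd c" shows "\<exists>c'. M (c' * c) = 1"
proof -
  have "coprime c p" using prime_imp_coprime[OF prime assms] by (simp add: ac_simps)
  then show ?thesis using inverse_mod_coprime[OF prime] by blast
qed

lemma Mp_coeff_dvd: assumes "Mp g = g" and "p dvd coeff g k" shows "coeff g k = 0"
  using assms Mp_coeff[of g k] by (metis M_def dvd_imp_mod_0)

text \<open>Division with remainder by any polynomial that is nonzero modulo \<open>p\<close>, obtained from
  pseudo-division by inverting the leading coefficient modulo \<open>p\<close>.\<close>

lemma division_m:
  assumes h: "Mp h \<noteq> 0"
  shows "\<exists>q r. zero_m (a - (h * q + r)) \<and> (r = 0 \<or> degree r < degree_m h)"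
proof -
  define c where "c = lead_coeff (Mp h)"
  have "\<not> p dvd c" using Mp_coeff_dvd[of "Mp h" "degree (Mp h)"] h by (auto simp: c_def)
  then obtain c' where c': "M (c' * c) = 1" using inverse_exists by blast
  obtain q r where qr: "pseudo_divmod a (Mp h) = (q, r)" by (cases "pseudo_divmod a (Mp h)") auto
  define k where "k = Suc (degree a) - degree (Mp h)"
  have eq: "smult (c ^ k) a = Mp h * q + r" and deg: "r = 0 \<or> degree r < degree_m h"
    using pseudo_divmod[OF h qr] by (simp_all add: c_def k_def)
  have "M (c' ^ k * c ^ k) = M (M (c' * c) ^ k)"
    unfolding M_def by (simp add: power_mod power_mult_distrib)
  then have "M (c' ^ k * c ^ k) = 1" using c' by simp
  then have "Mp (smult (c' ^ k * c ^ k) a) = Mp a"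
    using Mp_smult(1)[of "c' ^ k * c ^ k" a] by simp
  then have "zero_m (a - smult (c' ^ k) (Mp h * q + r))"
    unfolding eq[symmetric] zero_m_iff[symmetric] by simp
  moreover have "zero_m ((Mp h - h) * smult (c' ^ k) q)" by (rule zero_m_mult[OF zero_m_Mp])
  ultimately have "zero_m ((a - smult (c' ^ k) (Mp h * q + r)) + (Mp h - h) * smult (c' ^ k) q)"
    by (rule zero_m_add)
  also have "(a - smult (c' ^ k) (Mp h * q + r)) + (Mp h - h) * smult (c' ^ k) q
      = a - (h * smult (c' ^ k) q + smult (c' ^ k) r)"
    by (simp add: algebra_simps smult_add_right smult_diff_right)
  finally have "zero_m (a - (h * smult (c' ^ k) q + smult (c' ^ k) r))" .
  moreover have "smult (c' ^ k) r = 0 \<or> degree (smult (c' ^ k) r) < degree_m h"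
    using deg degree_smult_le[of "c' ^ k" r] by auto
  ultimately show ?thesis by blast
qed

text \<open>Hence every residue class modulo \<open>h\<close> has a representative of degree below that of \<open>h\<close>,
  and there are only finitely many classes.\<close>

lemma finite_residue_classes:
  assumes D: "degree_m h \<ge> 1"
  shows "finite (range (\<lambda>a. {b. h dvdm (a - b)}))"
proof -
  have h0: "Mp h \<noteq> 0" using D by auto
  define R where "R = {r. Mp r = r \<and> degree r < degree_m h}"
  have finR: "finite R"
  proof (rule finite_imageD[of coeffs])
    have "coeffs ` R \<subseteq> {xs. set xs \<subseteq> {0..<p} \<and> length xs \<le> degree_m h}"
    proof
      fix xs assume "xs \<in> coeffs ` R"
      then obtain r where r: "r \<in> R" and xs: "xs = coeffs r" by blast
      have "set xs \<subseteq> {0..<p}" using r Mp_ident_iff' unfolding R_def xs by blast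
      moreover have "length xs \<le> degree_m h"
        using r unfolding R_def xs by (cases "r = 0") (auto simp: length_coeffs_degree)
      ultimately show "xs \<in> {xs. set xs \<subseteq> {0..<p} \<and> length xs \<le> degree_m h}" by blast
    qed
    then show "finite (coeffs ` R)"
      by (rule finite_subset) (rule finite_lists_length_le, simp)
    show "inj_on coeffs R" by (rule inj_onI) (simp add: coeffs_eq_iff)
  qed
  have sub: "range (\<lambda>a. {b. h dvdm (a - b)}) \<subseteq> (\<lambda>r. {b. h dvdm (r - b)}) ` R"
  proof
    fix X assume "X \<in> range (\<lambda>a. {b. h dvdm (a - b)})"
    then obtain a where X: "X = {b. h dvdm (a - b)}" by blast
    obtain q r where qr: "zero_m (a - (h * q + r))" "r = 0 \<or> degree r < degree_m h"
      using division_m[OF h0] by blast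
    have rR: "Mp r \<in> R" using qr(2) D degree_m_le[of r] unfolding R_def by auto
    have eq: "a - Mp r - h * q = (a - (h * q + r)) + (r - Mp r)" by simp
    have "zero_m (a - Mp r - h * q)"
      unfolding eq by (rule zero_m_add[OF qr(1) zero_m_sym[OF zero_m_Mp]])
    then have ar: "h dvdm (a - Mp r)" unfolding dvdm_iff by blast
    have "h dvdm (a - b) \<longleftrightarrow> h dvdm (Mp r - b)" for b
      using dvdm_diff[OF _ ar, of "a - b"] dvdm_add[OF ar, of "Mp r - b"] by auto
    then have "X = {b. h dvdm (Mp r - b)}" unfolding X by simp
    with rR show "X \<in> (\<lambda>r. {b. h dvdm (r - b)}) ` R" by blast
  qed
  show ?thesis by (rule finite_subset[OF sub finite_imageI[OF finR]])
qed

definition combination_m :: "int poly \<Rightarrow> int poly \<Rightarrow> int poly \<Rightarrow> bool" where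
  "combination_m a h x \<longleftrightarrow> (\<exists>u v. zero_m (x - (u * a + v * h)))"

lemma combination_m_sub:
  assumes x: "combination_m a h x" and y: "combination_m a h y"
  shows "combination_m a h (x - y * k)"
proof -
  obtain u1 v1 u2 v2 where 1: "zero_m (x - (u1 * a + v1 * h))" and 2: "zero_m (y - (u2 * a + v2 * h))"
    using x y unfolding combination_m_def by blast
  have eq: "x - y * k - ((u1 - u2 * k) * a + (v1 - v2 * k) * h) =
    (x - (u1 * a + v1 * h)) - (y - (u2 * a + v2 * h)) * k" by (simp add: algebra_simps)
  have "zero_m (x - y * k - ((u1 - u2 * k) * a + (v1 - v2 * k) * h))"
    unfolding eq by (rule zero_m_diff[OF 1 zero_m_mult[OF 2]])
  then show ?thesis unfolding combination_m_def by blast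
qed

lemma combination_m_cong:
  assumes x: "combination_m a h x" and yx: "zero_m (y - x)"
  shows "combination_m a h y"
proof -
  obtain u v where 1: "zero_m (x - (u * a + v * h))" using x unfolding combination_m_def by blast
  have eq: "y - (u * a + v * h) = (y - x) + (x - (u * a + v * h))" by simp
  have "zero_m (y - (u * a + v * h))" unfolding eq by (rule zero_m_add[OF yx 1])
  then show ?thesis unfolding combination_m_def by blast
qed

text \<open>The ideal is principal: a combination \<open>e\<close> of minimal degree divides every combination,
  by division with remainder; in particular it divides \<open>a\<close> and \<open>h\<close>.\<close>

lemma common_divisor_combination:
  assumes a0: "Mp a \<noteq> 0"
  shows "\<exists>e. combination_m a h e \<and> (\<exists>q. zero_m (a - e * q)) \<and> (\<exists>q. zero_m (h - e * q))"
proof -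
  let ?J = "combination_m a h"
  have J_a: "?J a" unfolding combination_m_def
    by (rule exI[of _ 1], rule exI[of _ 0]) (simp add: zero_m_def)
  have J_h: "?J h" unfolding combination_m_def
    by (rule exI[of _ 0], rule exI[of _ 1]) (simp add: zero_m_def)
  define d where "d = (LEAST d. \<exists>e. ?J e \<and> Mp e \<noteq> 0 \<and> degree_m e = d)"
  have "\<exists>e. ?J e \<and> Mp e \<noteq> 0 \<and> degree_m e = degree_m a" using J_a a0 by blast
  then have "\<exists>e. ?J e \<and> Mp e \<noteq> 0 \<and> degree_m e = d" unfolding d_def by (rule LeastI)
  then obtain e where e: "?J e" "Mp e \<noteq> 0" "degree_m e = d" by blast
  have minimal: "d \<le> degree_m r" if "?J r" "Mp r \<noteq> 0" for r
    unfolding d_def by (rule Least_le) (use that in blast)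
  have divides: "\<exists>q. zero_m (x - e * q)" if x: "?J x" for x
  proof -
    obtain q r where qr: "zero_m (x - (e * q + r))" "r = 0 \<or> degree r < degree_m e"
      using division_m[OF e(2)] by blast
    have eq: "r - (x - e * q) = (e * q + r) - x" by simp
    have "zero_m (r - (x - e * q))" unfolding eq by (rule zero_m_sym[OF qr(1)])
    then have "?J r" by (rule combination_m_cong[OF combination_m_sub[OF x e(1)]])
    have "Mp r = 0"
    proof (rule ccontr)
      assume r0: "Mp r \<noteq> 0"
      then have "degree_m e \<le> degree r" using minimal[OF \<open>?J r\<close>] e(3) degree_m_le[of r] by simp
      moreover have "r \<noteq> 0" using r0 by auto
      ultimately show False using qr(2) by simp
    qed
    then have "zero_m ((x - (e * q + r)) + r)" by (intro zero_m_add[OF qr(1)]) (simp add: zero_m_def)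
    then show ?thesis by (intro exI[of _ q]) (simp add: algebra_simps)
  qed
  show ?thesis using e(1) divides[OF J_a] divides[OF J_h] by blast
qed

text \<open>For irreducible \<open>h\<close>, every \<open>a\<close> not divisible by \<open>h\<close> is invertible modulo \<open>h\<close>: the common
  divisor \<open>e\<close> of \<open>a\<close> and \<open>h\<close> cannot be an associate of \<open>h\<close>, so it is a unit.\<close>

lemma inverse_mod_irreducible:
  assumes irr: "irreducible_m h" and na: "\<not> h dvdm a"
  shows "\<exists>b. h dvdm (a * b - 1)"
proof -
  have "Mp a \<noteq> 0" using na dvdm_zero_m by (auto simp: zero_m_def)
  then obtain e u v qa qh where uv: "zero_m (e - (u * a + v * h))"
    and qa: "zero_m (a - e * qa)" and qh: "zero_m (h - e * qh)"
    using common_divisor_combination unfolding combination_m_def by blast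
  have "h =m e * qh" using qh by (simp add: zero_m_iff)
  then have "e dvdm 1 \<or> qh dvdm 1" using irr unfolding irreducible_m_def by blast
  then show ?thesis
  proof
    assume "qh dvdm 1"
    then obtain s where s: "zero_m (1 - qh * s)" unfolding dvdm_iff by blast
    have eq: "a - h * (s * qa) = (a - e * qa) + (1 - qh * s) * (e * qa) - (h - e * qh) * (s * qa)"
      by (simp add: algebra_simps)
    have "zero_m (a - h * (s * qa))"
      unfolding eq by (rule zero_m_diff[OF zero_m_add[OF qa zero_m_mult[OF s]] zero_m_mult[OF qh]])
    then have "h dvdm a" unfolding dvdm_iff by blast
    with na show ?thesis by blast
  next
    assume "e dvdm 1"
    then obtain s where s: "zero_m (1 - e * s)" unfolding dvdm_iff by blast
    have eq: "a * (u * s) - 1 - h * (- (v * s)) = - (1 - e * s) - (e - (u * a + v * h)) * s"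
      by (simp add: algebra_simps)
    have "zero_m (a * (u * s) - 1 - h * (- (v * s)))"
      unfolding eq by (rule zero_m_diff[OF zero_m_neg[OF s] zero_m_mult[OF uv]])
    then show ?thesis unfolding dvdm_iff by blast
  qed
qed

lemma quotient_field_mod:
  assumes irr: "irreducible_m h" and D: "degree_m h \<ge> 1"
  shows "quotient_field (\<lambda>x. h dvdm x)"
proof
  show "h dvdm 0" by (rule dvdm_zero_m) (simp add: zero_m_def)
  show "h dvdm (a + b)" if "h dvdm a" "h dvdm b" for a b using dvdm_add that by blast
  show "h dvdm (a * b)" if "h dvdm a" for a b using dvdm_factor that by blast
  show "\<not> h dvdm 1" using irr unfolding irreducible_m_def by blast
  show "\<exists>b. h dvdm (a * b - 1)" if "\<not> h dvdm a" for a by (rule inverse_mod_irreducible[OF irr that])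
  show "finite (range (\<lambda>a. {b. h dvdm (a - b)}))" by (rule finite_residue_classes[OF D])
qed

end

lemma X_power_eq_monom: "([:0, 1:] :: 'a::comm_ring_1 poly) ^ n = monom 1 n"
  by (induction n) (simp_all add: monom_Suc monom_0)

lemma pcompose_X_power: "pcompose ([:0, 1:] ^ n) (T::'a::comm_ring_1 poly) = T ^ n"
  by (induction n) (simp_all add: pcompose_mult pcompose_1 pcompose_pCons)

context poly_mod_prime begin

lemma const_unit: assumes "\<not> p dvd c" shows "\<exists>c'. zero_m (1 - [:c:] * [:c':])"
proof -
  obtain c' where c': "M (c' * c) = 1" using inverse_exists[OF assms] by blast
  have eq: "1 - [:c:] * [:c':] = [:1 - c * c':]"
    by (rule poly_eqI) (simp add: coeff_1 coeff_pCons split: nat.split)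
  have "M (1 - c * c') = M (1 - M (c' * c))" by (simp add: mult.commute)
  also have "\<dots> = 0" unfolding c' by simp
  finally have "zero_m [:1 - c * c':]" by (simp add: zero_m_def Mp_const_poly M_def)
  then show ?thesis unfolding eq[symmetric] by blast
qed

lemma const_not_dvdm:
  assumes "\<not> h dvdm 1" and "\<not> p dvd c"
  shows "\<not> h dvdm [:c:]"
proof
  assume hc: "h dvdm [:c:]"
  obtain c' where c': "zero_m (1 - [:c:] * [:c':])" using const_unit[OF assms(2)] by blast
  have "h dvdm [:c:] * [:c':]" using hc by (rule dvdm_factor)
  then have "h dvdm 1" using c' by (rule dvdm_cong)
  with assms(1) show False by blast
qed

lemma factors_nonzero_m:
  assumes ab: "Mp (a * b) \<noteq> 0"
  shows "Mp a \<noteq> 0" and "Mp b \<noteq> 0"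
proof
  assume "Mp a = 0" then have "Mp (a * b) = 0" using mult_Mp(1)[of a b] by simp
  with ab show False by simp
next
  show "Mp b \<noteq> 0"
  proof
    assume "Mp b = 0" then have "Mp (a * b) = 0" using mult_Mp(2)[of a b] by simp
    with ab show False by simp
  qed
qed

lemma unit_if_degree_0:
  assumes b0: "Mp b \<noteq> 0" and d: "degree (Mp b) = 0"
  shows "b dvdm 1"
proof -
  define c where "c = coeff (Mp b) 0"
  have bc: "Mp b = [:c:]" unfolding c_def using degree_0_id[OF d] by simp
  have "c \<noteq> 0" using b0 bc by auto
  then have "\<not> p dvd c" using Mp_coeff_dvd[of "Mp b" 0] unfolding c_def[symmetric] by auto
  then obtain c' where c': "zero_m (1 - [:c:] * [:c':])" using const_unit by blast
  have "zero_m ((1 - [:c:] * [:c':]) + (Mp b - b) * [:c':])" by (rule zero_m_add[OF c' zero_m_mult[OF zero_m_Mp]])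
  also have "(1 - [:c:] * [:c':]) + (Mp b - b) * [:c':] = 1 - b * [:c':]"
    unfolding bc by (simp add: algebra_simps)
  finally show ?thesis unfolding dvdm_iff by blast
qed

end

locale minimal_polynomial = poly_mod_prime p for p +
  fixes h T :: "int poly"
  assumes irreducible_h: "irreducible_m h" and degree_h: "degree_m h \<ge> 1"
begin

sublocale K: quotient_field "\<lambda>x. h dvdm x"
  by (rule quotient_field_mod[OF irreducible_h degree_h])

definition ev :: "int poly \<Rightarrow> int poly" where "ev a = pcompose a T"

definition annihilates :: "int poly \<Rightarrow> bool" where
  "annihilates f \<longleftrightarrow> Mp f \<noteq> 0 \<and> h dvdm ev f"

definition is_minpoly :: "int poly \<Rightarrow> bool" where
  "is_minpoly g \<longleftrightarrow> Mp g = g \<and> annihilates g \<and> (\<forall>f. annihilates f \<longrightarrow> degree g \<le> degree_m f)"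

lemma ev_add: "ev (a + b) = ev a + ev b"
  by (simp add: ev_def pcompose_add)

lemma ev_one: "ev 1 = 1"
  by (simp add: ev_def pcompose_1)

lemma ev_variable: "ev [:0, 1:] = T"
  by (simp add: ev_def pcompose_pCons)

lemma ev_diff: "ev (a - b) = ev a - ev b"
  by (simp add: ev_def pcompose_diff)

lemma ev_mult: "ev (a * b) = ev a * ev b"
  by (simp add: ev_def pcompose_mult)

lemma ev_zero_m: assumes "zero_m x" shows "zero_m (ev x)"
proof -
  have "x = smult p (Dp x)" using Dp_Mp_eq[of x] assms by (simp add: zero_m_def)
  then have "ev x = pcompose (smult p (Dp x)) T" unfolding ev_def by (rule arg_cong)
  also have "\<dots> = smult p (pcompose (Dp x) T)" by (rule pcompose_smult)
  finally show ?thesis by (simp add: zero_m_def)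
qed

lemma ev_dvdm_cong:
  assumes "h dvdm ev x" and "zero_m (y - x)"
  shows "h dvdm ev y"
proof (rule dvdm_cong[OF assms(1)])
  show "zero_m (ev y - ev x)" using ev_zero_m[OF assms(2)] by (simp add: ev_diff)
qed

text \<open>Some power difference \<open>t ^ i - t ^ j\<close> annihilates \<open>T\<close>, as \<open>F(p,h)\<close> is finite.\<close>

lemma annihilator_exists: "\<exists>f. annihilates f"
proof -
  have "range (\<lambda>i. K.scls (T ^ i)) \<subseteq> range K.scls" by auto
  then have "finite (range (\<lambda>i. K.scls (T ^ i)))" using K.finite_scls by (rule finite_subset)
  then have "\<not> inj (\<lambda>i. K.scls (T ^ i))" using finite_imageD[of _ "UNIV :: nat set"] by auto
  then obtain i j :: nat where ij: "i \<noteq> j" "K.scls (T ^ i) = K.scls (T ^ j)" unfolding inj_def by blast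
  define f where "f = ([:0, 1:] :: int poly) ^ i - [:0, 1:] ^ j"
  have "ev f = T ^ i - T ^ j" by (simp only: f_def ev_def pcompose_diff pcompose_X_power)
  then have "h dvdm ev f" using ij(2) unfolding K.scls_eq by simp
  moreover have "coeff (Mp f) i = 1" using ij(1) unfolding f_def X_power_eq_monom by (simp add: Mp_coeff)
  ultimately show ?thesis unfolding annihilates_def by (intro exI[of _ f]) auto
qed

lemma minpoly_exists: "\<exists>g. is_minpoly g"
proof -
  define d where "d = (LEAST d. \<exists>f. annihilates f \<and> degree_m f = d)"
  obtain f0 where "annihilates f0" using annihilator_exists by blast
  then have "\<exists>f. annihilates f \<and> degree_m f = degree_m f0" by blast
  then have "\<exists>f. annihilates f \<and> degree_m f = d" unfolding d_def by (rule LeastI)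
  then obtain f where f: "annihilates f" "degree_m f = d" by blast
  have min: "d \<le> degree_m f'" if "annihilates f'" for f'
    unfolding d_def by (rule Least_le) (use that in blast)
  have "annihilates (Mp f)"
    using f(1) ev_dvdm_cong[of f "Mp f"] zero_m_Mp by (simp add: annihilates_def)
  then have "is_minpoly (Mp f)" using min f(2) by (simp add: is_minpoly_def)
  then show ?thesis by blast
qed

lemma minpoly_kernel:
  assumes g: "is_minpoly g" and ga: "g dvdm a"
  shows "h dvdm ev a"
proof -
  obtain q where q: "zero_m (a - g * q)" using ga unfolding dvdm_iff by blast
  have "h dvdm ev g * ev q" using g by (simp add: dvdm_factor is_minpoly_def annihilates_def)
  moreover have "zero_m (ev a - ev g * ev q)" using ev_zero_m[OF q] by (simp add: ev_diff ev_mult)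
  ultimately show ?thesis by (rule dvdm_cong)
qed

text \<open>Nonzero constants do not vanish in \<open>F(p,h)\<close>, so the minimal polynomial is not constant.\<close>

lemma minpoly_degree:
  assumes g: "is_minpoly g"
  shows "degree g \<ge> 1"
proof (rule ccontr)
  assume "\<not> degree g \<ge> 1"
  then have "degree g = 0" by simp
  define c where "c = coeff g 0"
  have gc: "g = [:c:]" using \<open>degree g = 0\<close> unfolding c_def by (metis degree_0_id)
  have gM: "Mp g = g" and "g \<noteq> 0" and hg: "h dvdm ev g"
    using g by (auto simp: is_minpoly_def annihilates_def)
  then have "c \<noteq> 0" using gc by auto
  then have "\<not> p dvd c" using Mp_coeff_dvd[OF gM, of 0] unfolding c_def[symmetric] by auto
  then have "\<not> h dvdm [:c:]" by (rule const_not_dvdm[OF K.Zs_not_one])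
  moreover have "ev g = [:c:]" by (simp add: gc ev_def)
  ultimately show False using hg by simp
qed

text \<open>The minimal polynomial is irreducible: in a factorization one factor vanishes at \<open>T\<close>
  (as \<open>F(p,h)\<close> is a domain), so by minimality the other has degree zero, i.e. is a unit.\<close>

lemma minpoly_irreducible:
  assumes g: "is_minpoly g"
  shows "irreducible_m g"
  unfolding irreducible_m_def
proof (intro conjI allI impI)
  have gM: "Mp g = g" and g0: "g \<noteq> 0" using g by (auto simp: is_minpoly_def annihilates_def)
  show "\<not> g =m 0" using gM g0 by simp
  show "\<not> g dvdm 1"
  proof
    assume "g dvdm 1"
    then obtain s where "1 =m g * s" unfolding dvdm_def by blast
    then have "degree_m 1 = degree_m g + degree_m s" by (intro degree_m_eq_prime) (simp_all add: prime)
    then show False using minpoly_degree[OF g] gM by simp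
  qed
  fix a b assume gab: "g =m a * b"
  have "Mp (a * b) \<noteq> 0" using gab gM g0 by simp
  then have a0: "Mp a \<noteq> 0" and b0: "Mp b \<noteq> 0" by (rule factors_nonzero_m)+
  have "h dvdm ev (a * b)"
    using g ev_dvdm_cong[of g "a * b"] zero_m_sym gab unfolding zero_m_iff
    by (auto simp: is_minpoly_def annihilates_def)
  then have factor_vanishes: "h dvdm ev a \<or> h dvdm ev b" unfolding ev_mult by (rule K.Zs_prime)
  have degrees: "degree_m g = degree_m a + degree_m b"
    by (rule degree_m_eq_prime) (use gM g0 gab prime in auto)
  have minimal: "degree g \<le> degree_m f" if "Mp f \<noteq> 0" "h dvdm ev f" for f
    using g that unfolding is_minpoly_def annihilates_def by blast
  from factor_vanishes show "a dvdm 1 \<or> b dvdm 1"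
  proof
    assume "h dvdm ev a"
    then have "degree_m b = 0" using minimal[OF a0] degrees gM by simp
    then show ?thesis using unit_if_degree_0[OF b0] by blast
  next
    assume "h dvdm ev b"
    then have "degree_m a = 0" using minimal[OF b0] degrees gM by simp
    then show ?thesis using unit_if_degree_0[OF a0] by blast
  qed
qed

text \<open>If \<open>T\<close> is nonzero in \<open>F(p,h)\<close>, the minimal polynomial has nonzero constant term: otherwise
  \<open>g = t g2\<close> and \<open>g2\<close>, of smaller degree, would already annihilate \<open>T\<close>.\<close>

lemma minpoly_const_coeff:
  assumes g: "is_minpoly g" and T: "\<not> h dvdm T"
  shows "\<not> p dvd coeff g 0"
proof
  assume "p dvd coeff g 0"
  have gM: "Mp g = g" and g0: "g \<noteq> 0" using g by (auto simp: is_minpoly_def annihilates_def)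
  obtain a0 g2 where g_pCons: "g = pCons a0 g2" by (cases g)
  moreover have "a0 = 0" using Mp_coeff_dvd[OF gM \<open>p dvd _\<close>] g_pCons by simp
  ultimately have g2: "g = pCons 0 g2" by simp
  have g20: "g2 \<noteq> 0" using g0 g2 by auto
  have g2M: "Mp g2 = g2"
  proof (rule poly_eqI)
    fix k
    have "coeff (Mp g2) k = coeff (Mp g) (Suc k)" by (simp add: Mp_coeff g2)
    also have "\<dots> = coeff g (Suc k)" by (simp only: gM)
    finally show "coeff (Mp g2) k = coeff g2 k" by (simp add: g2)
  qed
  have "ev g = T * ev g2" by (simp add: g2 ev_def pcompose_pCons)
  then have "h dvdm T \<or> h dvdm ev g2" using g K.Zs_prime by (simp add: is_minpoly_def annihilates_def)
  then have "annihilates g2" using T g20 g2M by (simp add: annihilates_def)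
  then have "degree g \<le> degree_m g2" using g unfolding is_minpoly_def by blast
  then show False using g2 g20 g2M by simp
qed

lemma X_power_not_dvdm:
  assumes c0: "\<not> p dvd coeff h 0"
  shows "\<not> h dvdm [:0, 1:] ^ z"
proof -
  have X: "\<not> h dvdm [:0, 1:]"
  proof
    assume "h dvdm [:0, 1:]"
    obtain h0 hq where hh: "h = pCons h0 hq" by (cases h)
    have "h dvdm (h - [:0, 1:] * hq)"
      using dvdm_diff[OF dvd_imp_dvdm[OF dvd_refl] dvdm_factor[OF \<open>h dvdm [:0, 1:]\<close>]] .
    moreover have "h - [:0, 1:] * hq = [:h0:]" by (simp add: hh)
    moreover have "\<not> h dvdm [:h0:]"
      using c0 hh const_not_dvdm[OF K.Zs_not_one, of h0] by simp
    ultimately show False by simp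
  qed
  show ?thesis
  proof (induction z)
    case 0
    then show ?case using K.Zs_not_one by simp
  next
    case (Suc z)
    then show ?case using X K.Zs_prime[of "[:0, 1:]" "[:0, 1:] ^ z"] by (metis power_Suc)
  qed
qed

end

lemma alex_pow_eq: "alex_pow z a b = [:0, 1:] ^ z * a + (1 - [:0, 1:] ^ z) * b"
  unfolding alex_pow_def
proof (induction z)
  case 0
  then show ?case by simp
next
  case (Suc z)
  have "((\<lambda>x. alex_op x b) ^^ Suc z) a = alex_op (((\<lambda>x. alex_op x b) ^^ z) a) b" by simp
  also have "\<dots> = alex_op ([:0, 1:] ^ z * a + (1 - [:0, 1:] ^ z) * b) b" by (simp only: Suc.IH)
  also have "\<dots> = [:0, 1:] ^ Suc z * a + (1 - [:0, 1:] ^ Suc z) * b"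
    unfolding alex_op_def by (simp add: algebra_simps)
  finally show ?case .
qed

context poly_mod_prime begin

lemma col_dim_eq_sol_dim:
  assumes irr: "irreducible_m h" and deg: "degree_m h \<ge> 1"
  shows "col_dim p h z D =
    linear_system.sol_dim (\<lambda>x. h dvdm x) (n_arcs D) (crossings D) ([:0, 1:] ^ z)"
proof -
  interpret V: linear_system "\<lambda>x. h dvdm x" "n_arcs D" "crossings D"
    unfolding linear_system_def by (rule quotient_field_mod[OF irr deg])
  have ring: "x - (T * y + (1 - T) * w) = x - T * y - (1 - T) * w" for x y w T :: "int poly"
    by (simp add: algebra_simps)
  have col: "is_coloring p h z D c \<longleftrightarrow> c \<in> V.solutions ([:0, 1:] ^ z)" for c
    unfolding is_coloring_def V.solutions_def feq_def alex_pow_eq by (simp only: ring mem_Collect_eq)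
  have ind: "lin_indep p h (n_arcs D) d vs \<longleftrightarrow> V.indep vs d" for d vs
    unfolding lin_indep_def V.indep_def feq_def by (simp add: fun_sum_apply)
  show ?thesis unfolding col_dim_def V.sol_dim_def col ind ..
qed

lemma col_dim_le_arcs:
  assumes "irr_pos_breadth p h"
  shows "col_dim p h z D \<le> n_arcs D"
proof -
  have irr: "irreducible_m h" and deg: "degree_m h \<ge> 1"
    using assms by (auto simp: irr_pos_breadth_def)
  interpret V: linear_system "\<lambda>x. h dvdm x" "n_arcs D" "crossings D"
    unfolding linear_system_def by (rule quotient_field_mod[OF irr deg])
  show ?thesis unfolding col_dim_eq_sol_dim[OF irr deg] by (rule V.sol_dim_le_length)
qed

text \<open>The key step: with \<open>g\<close> the minimal polynomial of \<open>t ^ z\<close> in \<open>F(p,h)\<close>, the map \<open>t \<mapsto> t ^ z\<close>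
  embeds \<open>F(p,g)\<close> into \<open>F(p,h)\<close> and turns label-1 colorings over \<open>F(p,g)\<close> into label-\<open>z\<close>
  colorings over \<open>F(p,h)\<close>, so the dimension can only grow when passing to \<open>F(p,g)\<close>.\<close>

theorem col_dim_transfer:
  assumes h: "irr_pos_breadth p h"
  shows "\<exists>g. irr_pos_breadth p g \<and> col_dim p h z D \<le> col_dim p g 1 D"
proof -
  have irr: "irreducible_m h" and deg: "degree_m h \<ge> 1" and c0: "\<not> p dvd coeff h 0"
    using h by (auto simp: irr_pos_breadth_def)
  interpret M: minimal_polynomial p h "[:0, 1:] ^ z" by unfold_locales (rule irr, rule deg)
  obtain g where g: "M.is_minpoly g" using M.minpoly_exists by blast
  have gM: "Mp g = g" using g unfolding M.is_minpoly_def by blast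
  have g_irr: "irreducible_m g" and g_deg: "degree_m g \<ge> 1"
    using M.minpoly_irreducible[OF g] M.minpoly_degree[OF g] gM by simp_all
  have g_breadth: "irr_pos_breadth p g"
    using g_irr g_deg M.minpoly_const_coeff[OF g M.X_power_not_dvdm[OF c0]]
    by (simp add: irr_pos_breadth_def)
  interpret T: system_transfer "\<lambda>x. g dvdm x" "\<lambda>x. h dvdm x" M.ev "n_arcs D" "crossings D"
  proof (intro system_transfer.intro field_embedding.intro field_embedding_axioms.intro
      quotient_field_mod g_irr g_deg irr deg)
    show "M.ev (a + b) = M.ev a + M.ev b" for a b by (rule M.ev_add)
    show "M.ev (a * b) = M.ev a * M.ev b" for a b by (rule M.ev_mult)
    show "M.ev 1 = 1" by (rule M.ev_one)
    show "h dvdm M.ev a" if "g dvdm a" for a by (rule M.minpoly_kernel[OF g that])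
  qed
  have "col_dim p h z D = T.VK.sol_dim (M.ev [:0, 1:])"
    unfolding M.ev_variable by (rule col_dim_eq_sol_dim[OF irr deg])
  also have "\<dots> \<le> T.VF.sol_dim [:0, 1:]" by (rule T.sol_dim_transfer)
  also have "\<dots> = col_dim p g 1 D" using col_dim_eq_sol_dim[OF g_irr g_deg, of 1 D] by simp
  finally show ?thesis using g_breadth by blast
qed

end

lemma SUP_eq_if_mutually_dominated:
  fixes f :: "'a \<Rightarrow> 'c::conditionally_complete_lattice" and g :: "'b \<Rightarrow> 'c"
  assumes empty: "A = {} \<longleftrightarrow> B = {}"
    and bdd: "bdd_above (f ` A)" "bdd_above (g ` B)"
    and fg: "\<And>x. x \<in> A \<Longrightarrow> \<exists>y\<in>B. f x \<le> g y"
    and gf: "\<And>y. y \<in> B \<Longrightarrow> \<exists>x\<in>A. g y \<le> f x"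
  shows "(SUP x\<in>A. f x) = (SUP y\<in>B. g y)"
proof (cases "A = {}")
  case True
  then show ?thesis using empty by simp
next
  case False
  then have "B \<noteq> {}" using empty by simp
  have "(SUP x\<in>A. f x) \<le> (SUP y\<in>B. g y)" using False bdd(2) fg by (rule cSUP_mono)
  moreover have "(SUP y\<in>B. g y) \<le> (SUP x\<in>A. f x)" using \<open>B \<noteq> {}\<close> bdd(1) gf by (rule cSUP_mono)
  ultimately show ?thesis by (rule antisym)
qed

corollary a_inv_bounded:
  assumes "prime p" and "irr_pos_breadth p h"
  shows "a_inv p h z D \<le> int (n_arcs D) - 1"
  using poly_mod_prime.col_dim_le_arcs[of p h z D] assms
  by (simp add: poly_mod_prime_def a_inv_def)

corollary label_one_dominates:
  assumes "prime p" and "irr_pos_breadth p h"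
  shows "\<exists>g. irr_pos_breadth p g \<and> a_inv p h z D \<le> a_inv p g 1 D"
proof -
  obtain g where "irr_pos_breadth p g" "col_dim p h z D \<le> col_dim p g 1 D"
    using poly_mod_prime.col_dim_transfer[of p h z D] assms by (auto simp: poly_mod_prime_def)
  then show ?thesis unfolding a_inv_def by auto
qed

text \<open>\<open>A_Q\<close> is the supremum over all labels \<open>z\<close>; each label-\<open>z\<close> value is dominated by a label-1
  value (over another field of the family), and label 1 is one of the labels.\<close>

lemma A_Q_eq_label_one_SUP: "A_Q D = (SUP x \<in> QF. a_inv (fst x) (snd x) 1 D)"
proof -
  define L :: "(int \<times> int poly \<times> nat) set" where "L = {(p, h, z). (p, h) \<in> QF}"
  define F where "F x = a_inv (fst x) (fst (snd x)) (snd (snd x)) D" for x :: "int \<times> int poly \<times> nat"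
  define G where "G y = a_inv (fst y) (snd y) 1 D" for y :: "int \<times> int poly"
  have bound: "a_inv p h z D \<le> int (n_arcs D)" if "(p, h) \<in> QF" for p h z
    using that a_inv_bounded[of p h z D] by (simp add: QF_def)
  have "(SUP x \<in> L. F x) = (SUP y \<in> QF. G y)"
  proof (rule SUP_eq_if_mutually_dominated)
    show "L = {} \<longleftrightarrow> QF = {}"
    proof
      assume L: "L = {}"
      show "QF = {}"
      proof (rule equals0I)
        fix y assume "y \<in> QF"
        then have "(fst y, snd y, 0::nat) \<in> L" by (simp add: L_def)
        with L show False by simp
      qed
    qed (simp add: L_def)
    show "bdd_above (F ` L)"
      by (rule bdd_aboveI[of _ "int (n_arcs D)"]) (auto simp: L_def F_def bound)
    show "bdd_above (G ` QF)"
      by (rule bdd_aboveI[of _ "int (n_arcs D)"]) (auto simp: G_def bound)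
    show "\<exists>y\<in>QF. F x \<le> G y" if xL: "x \<in> L" for x
    proof -
      obtain p h z where x: "x = (p, h, z)" and ph: "prime p" "odd p" "irr_pos_breadth p h"
        using xL by (cases x) (auto simp: L_def QF_def)
      obtain g where "irr_pos_breadth p g" "a_inv p h z D \<le> a_inv p g 1 D"
        using label_one_dominates[OF ph(1) ph(3)] by blast
      then show ?thesis using ph by (intro bexI[of _ "(p, g)"]) (simp_all add: x F_def G_def QF_def)
    qed
    show "\<exists>x\<in>L. G y \<le> F x" if "y \<in> QF" for y
      using that by (intro bexI[of _ "(fst y, snd y, 1)"]) (simp_all add: L_def F_def G_def)
  qed
  then show ?thesis unfolding A_Q_def L_def F_def G_def .
qed

text \<open>The main theorem.\<close>

theorem lemma8p1:
  assumes "wf_diagram D"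
  shows "A_Q D = (SUP x \<in> QF. a_inv (fst x) (snd x) 1 D)
    \<and> (\<forall>p h z. prime p \<and> odd p \<and> irr_pos_breadth p h \<and> z \<ge> 1 \<longrightarrow>
          (\<exists>h'. irr_pos_breadth p h' \<and> a_inv p h z D \<le> a_inv p h' 1 D))"
  using A_Q_eq_label_one_SUP label_one_dominates by blast

end
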